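(* Let $r\in(r_-,0)\cup(r_+,\infty)$, where $r_\pm=(11\pm5\sqrt5)/2$. Then $T^2$ maps the bounded connected component of $E_r$ into the unbounded connected component of $E_r$.
   Context: $T(x,y)=\bigg(\dfrac{(1+y)(1+x-xy)^2}{(1+x)(-1-y+xy)(1+x-y^2)},\ \dfrac{(x-y)^2(1+x+y)}{(1+y-x^2)(1+x-y^2)}\bigg)$. $E_r\subset\mathbb{RP}^2$ is the real projective curve given by the homogenization of $(x+1)(y+1)(x+y+1)-rxy=0$, i.e. the level set $I=r$ of $I(x,y)=\frac{(x+1)(y+1)(x+y+1)}{xy}$. For these $r$, $E_r$ has exactly two connected components, one bounded (its intersection with the affine plane is bounded) and one unbounded. $T^2$ preserves the set $E_r$ (where defined). *)

theory Defs
  imports "HOL-Analysis.Analysis"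
begin

text \<open>The rational map T, written on the affine chart (points of real x real).\<close>
definition T :: "real \<times> real \<Rightarrow> real \<times> real" where
  "T p = (let x = fst p; y = snd p in
     ((1 + y) * (1 + x - x*y)^2 / ((1 + x) * (-1 - y + x*y) * (1 + x - y^2)),
      (x - y)^2 * (1 + x + y) / ((1 + y - x^2) * (1 + x - y^2))))"

definition T_defined_at :: "real \<times> real \<Rightarrow> bool" where
  "T_defined_at p = (let x = fst p; y = snd p in
     (1 + x) * (-1 - y + x*y) * (1 + x - y^2) \<noteq> 0 \<and>
     (1 + y - x^2) * (1 + x - y^2) \<noteq> 0)"

definition T2_defined_at :: "real \<times> real \<Rightarrow> bool" where
  "T2_defined_at p = (T_defined_at p \<and> T_defined_at (T p))"

text \<open>Affine part of E_r: zero set of (x+1)(y+1)(x+y+1) - r x y.\<close>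
definition E_aff :: "real \<Rightarrow> (real \<times> real) set" where
  "E_aff r = {p. (fst p + 1) * (snd p + 1) * (fst p + snd p + 1) - r * fst p * snd p = 0}"

definition r_minus :: real where "r_minus = (11 - 5 * sqrt 5) / 2"
definition r_plus :: real where "r_plus = (11 + 5 * sqrt 5) / 2"

end

theory Submission
  imports Defs "HOL-Library.Quadratic_Discriminant"
begin

text \<open>The function \<open>I(x, y) = (x + 1)(y + 1)(x + y + 1) / (x y)\<close> satisfies \<open>I \<circ> T = -1 / I\<close>,
  so \<open>T\<^sup>2\<close> preserves \<open>E\<^sub>r\<close>. For \<open>r > 0\<close> every point of \<open>E\<^sub>r\<close> outside the open positive
  quadrant, and for \<open>r < 0\<close> every point outside the open triangle \<open>x, y > -1, x + y < -1\<close>,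
  lies on an unbounded connected piece of \<open>E\<^sub>r\<close> made of graphs of the roots \<open>y(x)\<close> of the
  defining quadratic. Inside the region the curve keeps away from the boundary, so the region
  meets \<open>E\<^sub>r\<close> in a relatively clopen set and the bounded component lies in it. A sign analysis
  of the coordinates of \<open>T\<close> shows that \<open>T\<close> never takes values in either region; hence
  \<open>T\<^sup>2 q\<close> lies on \<open>E\<^sub>r\<close> but off the bounded component.\<close>

section \<open>The invariant and \<open>T\<^sup>2\<close>\<close>

definition I_numer :: "real \<times> real \<Rightarrow> real" where
  "I_numer p = (fst p + 1) * (snd p + 1) * (fst p + snd p + 1)"

lemma mem_E_aff_iff: "(x, y) \<in> E_aff r \<longleftrightarrow> I_numer (x, y) = r * x * y"
  by (simp add: E_aff_def I_numer_def)

lemma E_aff_swap: "(x, y) \<in> E_aff r \<Longrightarrow> (y, x) \<in> E_aff r"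
  by (simp add: mem_E_aff_iff I_numer_def algebra_simps)

lemma T_defined_at_factors:
  assumes "T_defined_at (x, y)"
  shows "1 + x \<noteq> 0" "-1 - y + x*y \<noteq> 0" "1 + x - y^2 \<noteq> 0" "1 + y - x^2 \<noteq> 0"
  using assms by (auto simp: T_defined_at_def)

lemma T_coordinates:
  fixes x y X Y :: real
  assumes "T_defined_at (x, y)" and "T (x, y) = (X, Y)"
  shows "X * ((1 + x) * (-1 - y + x*y) * (1 + x - y^2)) = (1 + y) * (1 + x - x*y)^2"
    and "Y * ((1 + y - x^2) * (1 + x - y^2)) = (x - y)^2 * (1 + x + y)"
    and "(X + 1) * ((1 + x) * (-1 - y + x*y) * (1 + x - y^2)) = - (x - y) * (1 + y - x^2) * y"
    and "(Y + 1) * ((1 + y - x^2) * (1 + x - y^2)) = (1 + x - x*y) * (1 + y - x*y)"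
    and "(X + Y + 1) * ((1 + x) * (-1 - y + x*y) * (1 + y - x^2)) = - (1 + x - x*y) * (x - y) * x"
proof -
  note nz = T_defined_at_factors[OF assms(1)]
  show X: "X * ((1 + x) * (-1 - y + x*y) * (1 + x - y^2)) = (1 + y) * (1 + x - x*y)^2"
    and Y: "Y * ((1 + y - x^2) * (1 + x - y^2)) = (x - y)^2 * (1 + x + y)"
    using assms(2) nz by (auto simp: T_def Let_def)
  then show "(X + 1) * ((1 + x) * (-1 - y + x*y) * (1 + x - y^2)) = - (x - y) * (1 + y - x^2) * y"
    and "(Y + 1) * ((1 + y - x^2) * (1 + x - y^2)) = (1 + x - x*y) * (1 + y - x*y)"
    by algebra+
  have "((X + Y + 1) * ((1 + x) * (-1 - y + x*y) * (1 + y - x^2)) + (1 + x - x*y) * (x - y) * x)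
        * (1 + x - y^2) = 0"
    using X Y by algebra
  then have "(X + Y + 1) * ((1 + x) * (-1 - y + x*y) * (1 + y - x^2)) + (1 + x - x*y) * (x - y) * x = 0"
    using nz(3) by simp
  then show "(X + Y + 1) * ((1 + x) * (-1 - y + x*y) * (1 + y - x^2)) = - (1 + x - x*y) * (x - y) * x"
    by algebra
qed

text \<open>This is \<open>I \<circ> T = -1 / I\<close> with the denominators cleared.\<close>

lemma I_numer_T:
  assumes "T_defined_at (x, y)" and "T (x, y) = (X, Y)"
  shows "I_numer (X, Y) * I_numer (x, y) = - (x*y) * X * Y"
proof -
  note nz = T_defined_at_factors[OF assms(1)]
  have "(I_numer (X, Y) * I_numer (x, y) + (x*y) * X * Y)
        * ((1 + x) * (-1 - y + x*y))^2 * (1 + x - y^2) * (1 + y - x^2)^2 = 0"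
    unfolding I_numer_def fst_conv snd_conv using T_coordinates[OF assms] by algebra
  then show ?thesis using nz by simp
qed

lemma E_aff_T_defined_nonzero:
  assumes "p \<in> E_aff r" and "T_defined_at p"
  shows "fst p \<noteq> 0" and "snd p \<noteq> 0"
  using assms by (auto simp: E_aff_def T_defined_at_def)

lemma T_maps_E_aff:
  assumes "p \<in> E_aff r" and "r \<noteq> 0" and "T_defined_at p"
  shows "T p \<in> E_aff (- 1 / r)"
proof -
  obtain x y X Y where p: "p = (x, y)" and Tp: "T p = (X, Y)" by (metis prod.exhaust)
  have "x \<noteq> 0" "y \<noteq> 0" using E_aff_T_defined_nonzero[OF assms(1,3)] p by auto
  have d: "T_defined_at (x, y)" "T (x, y) = (X, Y)" using assms(3) p Tp by auto
  have "I_numer (X, Y) * (r * x * y) = - (x*y) * X * Y"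
    using I_numer_T[OF d] assms(1) p by (simp add: mem_E_aff_iff)
  then have "(I_numer (X, Y) * r + X * Y) * (x * y) = 0" by algebra
  then have "I_numer (X, Y) * r = - X * Y"
    using \<open>x \<noteq> 0\<close> \<open>y \<noteq> 0\<close> by (simp add: eq_neg_iff_add_eq_0)
  then show ?thesis using Tp \<open>r \<noteq> 0\<close> by (simp add: mem_E_aff_iff field_simps)
qed

lemma T2_maps_E_aff:
  assumes "p \<in> E_aff r" and "r \<noteq> 0" and "T2_defined_at p"
  shows "T (T p) \<in> E_aff r"
proof -
  have d: "T_defined_at p" "T_defined_at (T p)" using assms(3) by (auto simp: T2_defined_at_def)
  have "T (T p) \<in> E_aff (- 1 / (- 1 / r))"
    using T_maps_E_aff[OF T_maps_E_aff[OF assms(1,2) d(1)] _ d(2)] assms(2) by simp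
  then show ?thesis by simp
qed

section \<open>\<open>T\<close> avoids the positive quadrant and the negative triangle\<close>

definition pos_quadrant :: "(real \<times> real) set" where
  "pos_quadrant = {z. 0 < fst z \<and> 0 < snd z}"

definition neg_triangle :: "(real \<times> real) set" where
  "neg_triangle = {z. -1 < fst z \<and> -1 < snd z \<and> fst z + snd z < -1}"

text \<open>The products in \<open>T_pos_quadrant_signs_incompatible\<close> and
  \<open>T_neg_triangle_signs_incompatible\<close> below are the signs of the coordinates of \<open>T (x, y)\<close>
  (shifted by \<open>1\<close> for the triangle) with squared factors dropped. They are excluded cell by cell
  in the arrangement of the lines \<open>x = -1\<close>, \<open>y = -1\<close>, \<open>x + y = -1\<close>, the hyperbola
  \<open>x y = 1 + y\<close> and the parabolas \<open>y = x\<^sup>2 - 1\<close>, \<open>x = y\<^sup>2 - 1\<close>; the next lemmas dispose of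
  the cells bounded by curves.\<close>

lemma hyperbola_antidiagonal_neg_y:
  fixes x y :: real
  assumes "y < 0" "x*y - 1 - y > 0" "1 + x + y > 0"
  shows False
proof -
  have "x - 1 > -2 - y" using assms by linarith
  then have "y*(x-1) < y*(-2-y)" using assms(1) by (simp add: mult_strict_left_mono_neg)
  then have "(y+1)^2 < 0" using assms(2) by (simp add: power2_eq_square algebra_simps)
  then show False using zero_le_power2[of "y+1"] by linarith
qed

lemma hyperbola_parabolas_pos_y:
  fixes x y :: real
  assumes "y > 0" "x*y - 1 - y > 0" "1 + y - x^2 > 0" "1 + x - y^2 > 0"
  shows False
proof -
  have xy: "x*y > 1 + y" using assms by simp
  then have "x > 0" using assms(1) mult_nonpos_nonneg[of x y] by (cases "x > 0") auto
  have "x*x < x*y" using xy assms(3) by (simp add: power2_eq_square)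
  then have "x < y" using \<open>x > 0\<close> by simp
  have "y*y < 1 + y" using assms(4) \<open>x < y\<close> by (simp add: power2_eq_square)
  have "x*y < y*y" using \<open>x < y\<close> assms(1) by (simp add: mult_strict_right_mono)
  then show False using xy \<open>y*y < 1 + y\<close> by linarith
qed

lemma parabolas_hyperbola_below_antidiagonal:
  fixes x y :: real
  assumes "1 + x - y^2 > 0" "1 + x > 0" "1 + y > 0" "x*y - 1 - y > 0" "1 + x + y < 0" "1 + y - x^2 < 0"
  shows False
proof -
  have y0: "y < 0" using assms by linarith
  have "x*y > 1 + y" using assms(4) by simp
  then have x0: "x < 0" using y0 assms(3) mult_nonneg_nonpos[of x y] by (cases "x < 0") auto
  have xg: "x > y^2 - 1" using assms(1) by simp
  then have "(-x)^2 < (1 - y^2)^2" using x0 by (intro power_strict_mono) auto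
  then have "1 + y < (1 - y^2)^2" using assms(6) by simp
  also have "(1 - y^2)^2 = (1 + y) * ((1 + y) * (1 - y)^2)" by (simp add: power2_eq_square algebra_simps)
  finally have "1 < (1 + y) * (1 - y)^2" using assms(3) by simp
  then have A: "y * (y^2 - y - 1) > 0" by (simp add: power2_eq_square algebra_simps)
  have "x*y < (y^2 - 1)*y" using xg y0 by (simp add: mult_strict_right_mono_neg)
  then have "(y + 1) * (y^2 - y - 1) > 0" using assms(4) by (simp add: power2_eq_square algebra_simps)
  then have "y^2 - y - 1 > 0" using assms(3) by (simp add: zero_less_mult_iff)
  then show False using A y0 by (simp add: zero_less_mult_iff)
qed

lemma parabolas_hyperbola_above_antidiagonal:
  fixes x y :: real
  assumes "1 + x - y^2 < 0" "1 + x > 0" "1 + y > 0" "x*y - 1 - y < 0" "1 + x + y > 0" "1 + y - x^2 < 0"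
  shows False
proof (cases "x > 0 \<and> y > 0")
  case True
  have e: "y * (x - 1) < 1" using assms(4) by (simp add: algebra_simps)
  show False
  proof (cases "x \<le> y")
    case True
    have "x*x > 1 + x" using assms(6) True by (simp add: power2_eq_square)
    have "x > 1"
    proof (rule ccontr)
      assume "\<not> x > 1"
      then have "x*x \<le> 1*x" using \<open>x > 0 \<and> y > 0\<close> by (intro mult_right_mono) auto
      then show False using \<open>x*x > 1 + x\<close> by simp
    qed
    have "x * (x - 1) \<le> y * (x - 1)" using True \<open>x > 1\<close> by (simp add: mult_right_mono)
    then show False using e \<open>x*x > 1 + x\<close> by (simp add: algebra_simps)
  next
    case False
    have "y*y > 1 + y" using assms(1) False by (simp add: power2_eq_square)
    have "y * (y - 1) < y * (x - 1)" using False \<open>x > 0 \<and> y > 0\<close> by (simp add: mult_strict_left_mono)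
    then show False using e \<open>y*y > 1 + y\<close> by (simp add: algebra_simps)
  qed
next
  case False
  then consider "x \<le> 0" | "y \<le> 0" "x > 0" by linarith
  then show False
  proof cases
    case 1
    have "x * (x + 1) \<le> 0" using 1 assms(2) mult_nonpos_nonneg[of x "x + 1"] by simp
    then have "x^2 \<le> -x" by (simp add: power2_eq_square algebra_simps)
    then show False using assms(5,6) by linarith
  next
    case 2
    have "y * (y + 1) \<le> 0" using 2 assms(3) mult_nonpos_nonneg[of y "y + 1"] by simp
    then have "y^2 \<le> -y" by (simp add: power2_eq_square algebra_simps)
    then show False using assms(1,3) 2 by linarith
  qed
qed

lemma parabolas_below_hyperbola_and_antidiagonal:
  fixes x y :: real
  assumes "1 + x - y^2 < 0" "1 + x > 0" "1 + y > 0" "x*y - 1 - y < 0" "1 + x + y < 0" "1 + y - x^2 > 0"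
  shows False
proof -
  have y0: "y < 0" using assms by linarith
  have xg: "x < y^2 - 1" using assms(1) by simp
  have "y * (y + 1) < 0" using y0 assms(3) by (simp add: mult_neg_pos)
  then have "y^2 < 1" using assms(3) by (simp add: power2_eq_square algebra_simps)
  have "1 - y^2 < -x" using xg by simp
  then have "(1 - y^2)^2 < (-x)^2" using \<open>y^2 < 1\<close> by (intro power_strict_mono) auto
  then have "(1 - y^2)^2 < 1 + y" using assms(6) by simp
  also have "(1 - y^2)^2 = (1 + y) * ((1 + y) * (1 - y)^2)" by (simp add: power2_eq_square algebra_simps)
  finally have "(1 + y) * (1 - y)^2 < 1" using assms(3) by simp
  then have A: "y * (y^2 - y - 1) < 0" by (simp add: power2_eq_square algebra_simps)
  have "x*y > (y^2 - 1)*y" using xg y0 by (simp add: mult_strict_right_mono_neg)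
  then have "(y + 1) * (y^2 - y - 1) < 0" using assms(4) by (simp add: power2_eq_square algebra_simps)
  then have "y^2 - y - 1 < 0" using assms(3) by (simp add: mult_less_0_iff)
  then show False using A y0 by (simp add: mult_less_0_iff)
qed

lemma T_pos_quadrant_signs_incompatible:
  fixes x y :: real
  assumes P1: "0 < (1 + y) * (1 + x) * (x*y - 1 - y) * (1 + x - y^2)"
    and P2: "0 < (1 + x + y) * (1 + y - x^2) * (1 + x - y^2)"
  shows False
proof -
  define A B E G S H where "A = 1 + x" "B = 1 + y" "E = x*y - 1 - y" "G = 1 + x - y^2"
    "S = 1 + x + y" "H = 1 + y - x^2"
  note defs = this
  have q: "0 < B * A * E * G" "0 < S * H * G" using P1 P2 defs by auto
  have f1: "y < 0 \<Longrightarrow> E > 0 \<Longrightarrow> S > 0 \<Longrightarrow> False"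
    unfolding defs by (rule hyperbola_antidiagonal_neg_y)
  have f2: "y > 0 \<Longrightarrow> E > 0 \<Longrightarrow> H > 0 \<Longrightarrow> G > 0 \<Longrightarrow> False"
    unfolding defs by (rule hyperbola_parabolas_pos_y)
  have f3: "G > 0 \<Longrightarrow> A > 0 \<Longrightarrow> B > 0 \<Longrightarrow> E > 0 \<Longrightarrow> S < 0 \<Longrightarrow> H < 0 \<Longrightarrow> False"
    unfolding defs by (rule parabolas_hyperbola_below_antidiagonal)
  have f4: "G < 0 \<Longrightarrow> A > 0 \<Longrightarrow> B > 0 \<Longrightarrow> E < 0 \<Longrightarrow> S > 0 \<Longrightarrow> H < 0 \<Longrightarrow> False"
    unfolding defs by (rule parabolas_hyperbola_above_antidiagonal)
  have f5: "G < 0 \<Longrightarrow> A > 0 \<Longrightarrow> B > 0 \<Longrightarrow> E < 0 \<Longrightarrow> S < 0 \<Longrightarrow> H > 0 \<Longrightarrow> False"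
    unfolding defs by (rule parabolas_below_hyperbola_and_antidiagonal)
  have f6: "G > 0 \<Longrightarrow> B < 0 \<Longrightarrow> S > 0"
  proof -
    assume "G > 0" "B < 0"
    then have "0 < y * (y + 1)" using defs by (simp add: mult_neg_neg)
    then show "S > 0" using \<open>G > 0\<close> defs by (simp add: power2_eq_square algebra_simps)
  qed
  have f7: "A < 0 \<Longrightarrow> y > 0 \<Longrightarrow> E < 0"
  proof -
    assume "A < 0" "y > 0"
    then have "y * (x - 1) < 0" using defs by (simp add: mult_pos_neg)
    then show "E < 0" using defs by (simp add: algebra_simps)
  qed
  have f8: "A < 0 \<Longrightarrow> H > 0 \<Longrightarrow> y > 0"
  proof -
    assume "A < 0" "H > 0"
    then have "1 * 1 < (-x) * (-x)" using defs by (intro mult_strict_mono) auto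
    then show "y > 0" using \<open>H > 0\<close> defs by (simp add: power2_eq_square)
  qed
  have t1: "B < 0 \<Longrightarrow> H < 0" and t2: "G > 0 \<Longrightarrow> A > 0"
    using defs zero_le_power2[of x] zero_le_power2[of y] by linarith+
  have t3: "y = 0 \<Longrightarrow> E < 0" using defs by simp
  show False
    using q f1 f2 f3 f4 f5 f6 f7 f8 t1 t2 t3 defs
    by (cases y "0::real" rule: linorder_cases; auto simp: zero_less_mult_iff mult_less_0_iff)
qed

lemma T_neg_triangle_signs_incompatible:
  fixes x y :: real
  assumes P1: "0 < (x - y) * y * (1 + x - x*y) * (1 + x)"
    and P2: "(1 + x - y^2) * (x - y) * x * (1 + x) < 0"
  shows False
proof -
  define A D U G where "A = 1 + x" "D = x - y" "U = 1 + x - x*y" "G = 1 + x - y^2"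
  note defs = this
  have q: "0 < D * y * U * A" "G * D * x * A < 0" using P1 P2 defs by auto
  have GU: "G - U = y * D" unfolding defs by (simp add: power2_eq_square algebra_simps)
  have f1: "D > 0 \<Longrightarrow> y > 0 \<Longrightarrow> U > 0 \<Longrightarrow> G < 0 \<Longrightarrow> False"
  proof -
    assume h: "D > 0" "y > 0" "U > 0" "G < 0"
    have "y*y > 1 + y" using h defs by (simp add: power2_eq_square)
    have "x * (y - 1) < 1" using h defs by (simp add: algebra_simps)
    have "y > 1"
    proof (rule ccontr)
      assume "\<not> y > 1"
      then have "y*y \<le> 1*y" using h(2) by (intro mult_right_mono) auto
      then show False using \<open>y*y > 1 + y\<close> by simp
    qed
    have "y * (y - 1) < x * (y - 1)" using h defs \<open>y > 1\<close> by (simp add: mult_strict_right_mono)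
    then show False using \<open>x * (y - 1) < 1\<close> \<open>y*y > 1 + y\<close> by (simp add: algebra_simps)
  qed
  have f2: "y < 0 \<Longrightarrow> D > 0 \<Longrightarrow> G < U" "y > 0 \<Longrightarrow> D < 0 \<Longrightarrow> G < U"
    "y < 0 \<Longrightarrow> D < 0 \<Longrightarrow> U < G"
    using GU mult_neg_pos[of y D] mult_pos_neg[of y D] mult_neg_neg[of y D] by linarith+
  have f3: "U > 0" if "x > 0" "y < 0"
    using mult_pos_neg[OF that] that defs by simp
  have f4: "U > 0" if "x < 0" "y > 0" "A > 0"
    using mult_neg_pos[OF that(1,2)] that defs by simp
  have f5: "U < 0" if "A < 0" "y < 0"
    using mult_neg_neg[of x y] that defs by simp
  have f6: "G > 0 \<Longrightarrow> A > 0" using defs zero_le_power2[of y] by linarith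
  show False
    using q f1 f2 f3 f4 f5 f6 defs
    by (cases x "0::real" rule: linorder_cases; auto simp: zero_less_mult_iff mult_less_0_iff)
qed

lemma zero_less_mult_of_mult_eq:
  fixes a d n :: real
  assumes "a * d = n" and "0 < a" and "d \<noteq> 0"
  shows "0 < n * d"
proof -
  have "n * d = a * d^2" using assms(1) by (simp add: power2_eq_square mult.assoc flip: assms(1))
  then show ?thesis using assms(2,3) by simp
qed

lemma mult_less_zero_of_mult_eq:
  fixes a d n :: real
  assumes "a * d = n" and "a < 0" and "d \<noteq> 0"
  shows "n * d < 0"
  using zero_less_mult_of_mult_eq[of "- a" d "- n"] assms by simp

lemma zero_less_of_eq_mult_square:
  fixes a c k :: real
  assumes "0 < a" and "a = c * k^2"
  shows "0 < c"
  using assms by (simp add: zero_less_mult_iff)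

lemma less_zero_of_eq_mult_square:
  fixes a c k :: real
  assumes "a < 0" and "a = c * k^2"
  shows "c < 0"
  using assms by (simp add: mult_less_0_iff)

lemma T_notin_pos_quadrant:
  assumes "T_defined_at p"
  shows "T p \<notin> pos_quadrant"
proof
  assume "T p \<in> pos_quadrant"
  obtain x y X Y where p: "p = (x, y)" and Tp: "T p = (X, Y)" by (metis prod.exhaust)
  have d: "T_defined_at (x, y)" "T (x, y) = (X, Y)" using assms p Tp by auto
  note nz = T_defined_at_factors[OF d(1)] and eq = T_coordinates[OF d]
  have XY: "0 < X" "0 < Y" using \<open>T p \<in> pos_quadrant\<close> Tp by (auto simp: pos_quadrant_def)
  have "0 < (1 + y) * (1 + x - x*y)^2 * ((1 + x) * (-1 - y + x*y) * (1 + x - y^2))"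
    using zero_less_mult_of_mult_eq[OF eq(1) XY(1)] nz by simp
  then have "0 < (1 + y) * (1 + x) * (x*y - 1 - y) * (1 + x - y^2)"
    by (rule zero_less_of_eq_mult_square[where k = "1 + x - x*y"]) algebra
  moreover have "0 < (x - y)^2 * (1 + x + y) * ((1 + y - x^2) * (1 + x - y^2))"
    using zero_less_mult_of_mult_eq[OF eq(2) XY(2)] nz by simp
  then have "0 < (1 + x + y) * (1 + y - x^2) * (1 + x - y^2)"
    by (rule zero_less_of_eq_mult_square[where k = "x - y"]) algebra
  ultimately show False by (rule T_pos_quadrant_signs_incompatible)
qed

lemma T_notin_neg_triangle:
  assumes "T_defined_at p"
  shows "T p \<notin> neg_triangle"
proof
  assume "T p \<in> neg_triangle"
  obtain x y X Y where p: "p = (x, y)" and Tp: "T p = (X, Y)" by (metis prod.exhaust)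
  have d: "T_defined_at (x, y)" "T (x, y) = (X, Y)" using assms p Tp by auto
  note nz = T_defined_at_factors[OF d(1)] and eq = T_coordinates[OF d]
  have XY: "0 < X + 1" "0 < Y + 1" "X + Y + 1 < 0"
    using \<open>T p \<in> neg_triangle\<close> Tp by (auto simp: neg_triangle_def)
  have F1: "0 < - (x - y) * (1 + y - x^2) * y * ((1 + x) * (-1 - y + x*y) * (1 + x - y^2))"
    using zero_less_mult_of_mult_eq[OF eq(3) XY(1)] nz by simp
  have F2: "0 < (1 + x - x*y) * (1 + y - x*y) * ((1 + y - x^2) * (1 + x - y^2))"
    using zero_less_mult_of_mult_eq[OF eq(4) XY(2)] nz by simp
  have F3: "- (1 + x - x*y) * (x - y) * x * ((1 + x) * (-1 - y + x*y) * (1 + y - x^2)) < 0"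
    using mult_less_zero_of_mult_eq[OF eq(5) XY(3)] nz by simp
  from F1 F2 have "0 < (- (x - y) * (1 + y - x^2) * y * ((1 + x) * (-1 - y + x*y) * (1 + x - y^2)))
      * ((1 + x - x*y) * (1 + y - x*y) * ((1 + y - x^2) * (1 + x - y^2)))"
    by (rule mult_pos_pos)
  then have "0 < (x - y) * y * (1 + x - x*y) * (1 + x)"
    by (rule zero_less_of_eq_mult_square[where k = "(-1 - y + x*y) * (1 + y - x^2) * (1 + x - y^2)"])
      algebra
  moreover from F3 F2 have "(- (1 + x - x*y) * (x - y) * x * ((1 + x) * (-1 - y + x*y) * (1 + y - x^2)))
      * ((1 + x - x*y) * (1 + y - x*y) * ((1 + y - x^2) * (1 + x - y^2))) < 0"
    by (rule mult_neg_pos)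
  then have "(1 + x - y^2) * (x - y) * x * (1 + x) < 0"
    by (rule less_zero_of_eq_mult_square[where k = "(1 + x - x*y) * (-1 - y + x*y) * (1 + y - x^2)"])
      algebra
  ultimately show False by (rule T_neg_triangle_signs_incompatible)
qed

section \<open>Unbounded branches of \<open>E\<^sub>r\<close>\<close>

lemma unbounded_atMost: "\<not> bounded {..x :: real}"
proof
  assume "bounded {..x}"
  then obtain B where B: "\<forall>y\<in>{..x}. \<bar>y\<bar> \<le> B" by (auto simp: bounded_real)
  have "min x (- \<bar>B\<bar> - 1) \<in> {..x}" by simp
  then have "\<bar>min x (- \<bar>B\<bar> - 1)\<bar> \<le> B" using B by blast
  then show False by arith
qed

lemma unbounded_atLeast: "\<not> bounded {x :: real..}"
proof
  assume "bounded {x..}"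
  then obtain B where B: "\<forall>y\<in>{x..}. \<bar>y\<bar> \<le> B" by (auto simp: bounded_real)
  have "max x (\<bar>B\<bar> + 1) \<in> {x..}" by simp
  then have "\<bar>max x (\<bar>B\<bar> + 1)\<bar> \<le> B" using B by blast
  then show False by arith
qed

text \<open>Away from \<open>x = -1\<close>, \<open>E\<^sub>r\<close> is the union of the graphs of the two roots \<open>y\<close> of the
  quadratic \<open>(x + 1) y\<^sup>2 + E_coeff r x \<cdot> y + (x + 1)\<^sup>2\<close>.\<close>

definition E_coeff :: "real \<Rightarrow> real \<Rightarrow> real" where
  "E_coeff r x = (x + 1) * (x + 2) - r * x"

definition E_discr :: "real \<Rightarrow> real \<Rightarrow> real" where
  "E_discr r x = discrim (x + 1) (E_coeff r x) ((x + 1)^2)"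

definition E_branch :: "real \<Rightarrow> real \<Rightarrow> real \<Rightarrow> real" where
  "E_branch r \<sigma> x = (- E_coeff r x + \<sigma> * sqrt (E_discr r x)) / (2 * (x + 1))"

lemma E_aff_iff_quadratic: "(x, y) \<in> E_aff r \<longleftrightarrow> (x + 1) * y^2 + E_coeff r x * y + (x + 1)^2 = 0"
proof -
  have "(x + 1) * (y + 1) * (x + y + 1) - r * x * y = (x + 1) * y^2 + E_coeff r x * y + (x + 1)^2"
    unfolding E_coeff_def by algebra
  then show ?thesis unfolding E_aff_def by (simp only: mem_Collect_eq fst_conv snd_conv)
qed

lemma E_branch_mem_E_aff:
  assumes "x + 1 \<noteq> 0" and "0 \<le> E_discr r x" and "\<sigma> = 1 \<or> \<sigma> = -1"
  shows "(x, E_branch r \<sigma> x) \<in> E_aff r"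
  using assms discriminant_nonneg[of "x + 1" "E_coeff r x" "(x + 1)^2" "E_branch r \<sigma> x"]
  unfolding E_aff_iff_quadratic by (auto simp: E_branch_def E_discr_def)

lemma E_aff_on_branch:
  assumes "x + 1 \<noteq> 0" and "(x, y) \<in> E_aff r"
  obtains \<sigma> where "\<sigma> = 1 \<or> \<sigma> = -1" and "y = E_branch r \<sigma> x"
proof -
  have eq: "(x + 1) * y^2 + E_coeff r x * y + (x + 1)^2 = 0"
    using assms(2) E_aff_iff_quadratic by blast
  have "0 \<le> E_discr r x"
  proof (rule ccontr)
    assume "\<not> 0 \<le> E_discr r x"
    then show False
      using discriminant_negative[OF assms(1)] eq by (auto simp: E_discr_def)
  qed
  then have "y = E_branch r 1 x \<or> y = E_branch r (-1) x"
    using discriminant_nonneg[OF assms(1), of "E_coeff r x" "(x + 1)^2" y] eq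
    by (auto simp: E_branch_def E_discr_def)
  then show ?thesis using that by blast
qed

lemma E_discr_eq: "E_discr r x = (E_coeff r x)^2 - 4 * (x + 1)^3"
  by (simp add: E_discr_def discrim_def power2_eq_square power3_eq_cube)

lemma E_discr_pos_left:
  assumes "x < -1"
  shows "0 < E_discr r x"
proof -
  have "(x + 1)^3 < 0" using assms by (simp add: power_less_zero_eq)
  then show ?thesis unfolding E_discr_eq using zero_le_power2[of "E_coeff r x"] by linarith
qed

lemma E_discr_nonneg:
  assumes "-1 \<le> x" and "r * x \<le> 0"
  shows "0 \<le> E_discr r x"
proof -
  have "((x + 1) * (x + 2))^2 \<le> (E_coeff r x)^2"
    using assms by (intro power_mono) (auto simp: E_coeff_def)
  moreover have "((x + 1) * (x + 2))^2 - 4 * (x + 1)^3 = ((x + 1) * x)^2" by algebra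
  ultimately show ?thesis unfolding E_discr_eq using zero_le_power2[of "(x + 1) * x"] by linarith
qed

lemma E_branch_at_zero: "E_branch r \<sigma> 0 = -1"
  by (simp add: E_branch_def E_discr_def E_coeff_def discrim_def)

lemma connected_E_branch_graph:
  assumes "\<forall>x\<in>I. x + 1 \<noteq> 0" and "connected I"
  shows "connected ((\<lambda>x. (x, E_branch r \<sigma> x)) ` I)"
  using assms unfolding E_branch_def E_discr_def E_coeff_def discrim_def
  by (intro connected_continuous_image continuous_intros) auto

lemma E_branch_graph_subset:
  assumes "\<forall>x\<in>I. x + 1 \<noteq> 0 \<and> 0 \<le> E_discr r x" and "\<sigma> = 1 \<or> \<sigma> = -1"
  shows "(\<lambda>x. (x, E_branch r \<sigma> x)) ` I \<subseteq> E_aff r"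
  using assms E_branch_mem_E_aff by auto

lemma E_branch_unbounded_at_asymptote:
  assumes "0 < r"
  shows "\<not> bdd_below (E_branch r (-1) ` {-1<..0})"
proof
  assume "bdd_below (E_branch r (-1) ` {-1<..0})"
  then obtain M where M: "\<forall>x\<in>{-1<..0}. M \<le> E_branch r (-1) x"
    by (auto simp: bdd_below_def)
  define t where "t = min (1/2) (r / (4 * (\<bar>M\<bar> + 1)))"
  have t: "0 < t" "t \<le> 1/2" "t * (4 * (\<bar>M\<bar> + 1)) \<le> r"
    using assms by (auto simp: t_def min_def pos_le_divide_eq)
  define x where "x = t - 1"
  have x: "-1 < x" "x \<le> 0" using t by (auto simp: x_def)
  have "r / 2 \<le> E_coeff r x"
  proof -
    have "r * (1/2) \<le> r * (- x)" using assms t by (intro mult_left_mono) (auto simp: x_def)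
    moreover have "0 \<le> (x + 1) * (x + 2)" using x by simp
    ultimately show ?thesis unfolding E_coeff_def by linarith
  qed
  moreover have "0 \<le> sqrt (E_discr r x)"
    using x assms by (simp add: E_discr_nonneg mult_nonneg_nonpos)
  moreover have "E_branch r (-1) x * (2 * t) = - E_coeff r x - sqrt (E_discr r x)"
    using t by (simp add: E_branch_def x_def)
  moreover have "M * (2 * t) \<le> E_branch r (-1) x * (2 * t)"
    using M x t by (intro mult_right_mono) auto
  moreover have "- r / 2 \<le> - (\<bar>M\<bar> + 1) * (2 * t)"
    using t by (simp add: algebra_simps)
  ultimately have "M * (2 * t) \<le> - (\<bar>M\<bar> + 1) * (2 * t)" by linarith
  then have "M \<le> - (\<bar>M\<bar> + 1)" using t(1) by simp
  then show False using abs_ge_minus_self[of M] by linarith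
qed

definition on_unbounded_branch :: "real \<Rightarrow> real \<times> real \<Rightarrow> bool" where
  "on_unbounded_branch r p \<longleftrightarrow> (\<exists>S. connected S \<and> \<not> bounded S \<and> S \<subseteq> E_aff r \<and> p \<in> S)"

lemma unbounded_component_if_on_unbounded_branch:
  assumes "on_unbounded_branch r p"
  shows "\<not> bounded (connected_component_set (E_aff r) p)"
proof
  assume "bounded (connected_component_set (E_aff r) p)"
  moreover obtain S where "connected S" "\<not> bounded S" "S \<subseteq> E_aff r" "p \<in> S"
    using assms by (auto simp: on_unbounded_branch_def)
  ultimately show False
    using connected_component_maximal bounded_subset by metis
qed

lemma on_unbounded_branch_swap:
  assumes "on_unbounded_branch r (y, x)"
  shows "on_unbounded_branch r (x, y)"
proof -
  obtain S where S: "connected S" "\<not> bounded S" "S \<subseteq> E_aff r" "(y, x) \<in> S"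
    using assms by (auto simp: on_unbounded_branch_def)
  have "connected (prod.swap ` S)"
    using S(1) by (intro connected_continuous_image continuous_intros)
  moreover have "norm (prod.swap z) = norm z" for z :: "real \<times> real"
    by (cases z) (simp add: norm_Pair add.commute)
  then have "\<not> bounded (prod.swap ` S)" using S(2) by (simp add: bounded_iff)
  moreover have "prod.swap ` S \<subseteq> E_aff r" using S(3) E_aff_swap by auto
  moreover have "(x, y) \<in> prod.swap ` S" using S(4) by force
  ultimately show ?thesis by (auto simp: on_unbounded_branch_def)
qed

lemma on_unbounded_branch_graph:
  assumes "connected I" and "\<not> bounded I" and "x \<in> I"
    and "\<forall>x\<in>I. x + 1 \<noteq> 0 \<and> 0 \<le> E_discr r x" and "\<sigma> = 1 \<or> \<sigma> = -1"
  shows "on_unbounded_branch r (x, E_branch r \<sigma> x)"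
proof -
  let ?S = "(\<lambda>x. (x, E_branch r \<sigma> x)) ` I"
  have "connected ?S" using assms(1,4) by (intro connected_E_branch_graph) auto
  moreover have "\<not> bounded ?S"
    using assms(2) bounded_fst[of ?S] by (auto simp: image_image)
  moreover have "?S \<subseteq> E_aff r" using assms(4,5) by (rule E_branch_graph_subset)
  ultimately show ?thesis using assms(3) by (auto simp: on_unbounded_branch_def)
qed

lemma on_unbounded_branch_left:
  assumes "(x, y) \<in> E_aff r" and "x < -1"
  shows "on_unbounded_branch r (x, y)"
proof -
  have "x + 1 \<noteq> 0" using assms(2) by simp
  then obtain \<sigma> where \<sigma>: "\<sigma> = 1 \<or> \<sigma> = -1" "y = E_branch r \<sigma> x"
    using assms(1) by (rule E_aff_on_branch)
  have "\<forall>t\<in>{..x}. t + 1 \<noteq> 0 \<and> 0 \<le> E_discr r t"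
    using assms(2) E_discr_pos_left by (simp add: less_imp_le)
  then show ?thesis
    unfolding \<sigma>(2) using unbounded_atMost \<sigma>(1) by (intro on_unbounded_branch_graph) auto
qed

lemma on_unbounded_branch_right:
  assumes "(x, y) \<in> E_aff r" and "0 \<le> x" and "r \<le> 0"
  shows "on_unbounded_branch r (x, y)"
proof -
  have "x + 1 \<noteq> 0" using assms(2) by simp
  then obtain \<sigma> where \<sigma>: "\<sigma> = 1 \<or> \<sigma> = -1" "y = E_branch r \<sigma> x"
    using assms(1) by (rule E_aff_on_branch)
  have "\<forall>t\<in>{x..}. t + 1 \<noteq> 0 \<and> 0 \<le> E_discr r t"
    using assms(2,3) by (auto intro!: E_discr_nonneg simp: mult_nonpos_nonneg)
  then show ?thesis
    unfolding \<sigma>(2) using unbounded_atLeast \<sigma>(1) by (intro on_unbounded_branch_graph) auto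
qed

text \<open>For \<open>r > 0\<close> the branch through \<open>(x, y)\<close> over \<open>[x, 0]\<close> reaches \<open>(0, -1)\<close>, where it
  meets the other branch, which escapes along the asymptote \<open>x = -1\<close>.\<close>

lemma on_unbounded_branch_middle:
  assumes "(x, y) \<in> E_aff r" and "-1 < x" "x \<le> 0" and "0 < r"
  shows "on_unbounded_branch r (x, y)"
proof -
  have "x + 1 \<noteq> 0" using assms(2) by simp
  then obtain \<sigma> where \<sigma>: "\<sigma> = 1 \<or> \<sigma> = -1" "y = E_branch r \<sigma> x"
    using assms(1) by (rule E_aff_on_branch)
  define S1 where "S1 = (\<lambda>t. (t, E_branch r \<sigma> t)) ` {x..0}"
  define S2 where "S2 = (\<lambda>t. (t, E_branch r (-1) t)) ` {-1<..0}"
  have discr: "t + 1 \<noteq> 0 \<and> 0 \<le> E_discr r t" if "-1 < t" "t \<le> 0" for t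
    using that assms(4) E_discr_nonneg[of t r] by (simp add: mult_nonneg_nonpos)
  have "(0, -1) \<in> S1" "(0, -1) \<in> S2"
    using assms(3) E_branch_at_zero unfolding S1_def S2_def by (auto intro!: image_eqI[where x=0])
  then have "connected (S1 \<union> S2)"
    unfolding S1_def S2_def using assms(2)
    by (intro connected_Un connected_E_branch_graph) auto
  moreover have "S1 \<subseteq> E_aff r" "S2 \<subseteq> E_aff r"
    unfolding S1_def S2_def using assms(2) \<sigma>(1) discr by (intro E_branch_graph_subset; simp)+
  moreover have "\<not> bounded (S1 \<union> S2)"
  proof
    assume "bounded (S1 \<union> S2)"
    then have "bounded (snd ` S2)" by (auto intro: bounded_snd bounded_subset)
    then have "bdd_below (E_branch r (-1) ` {-1<..0})"
      by (simp add: S2_def image_image bounded_imp_bdd_below)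
    then show False using E_branch_unbounded_at_asymptote[OF assms(4)] by contradiction
  qed
  moreover have "(x, y) \<in> S1 \<union> S2" using \<sigma>(2) assms(3) by (auto simp: S1_def)
  ultimately show ?thesis by (auto simp: on_unbounded_branch_def intro!: exI[of _ "S1 \<union> S2"])
qed

lemma on_unbounded_branch_outside_pos_quadrant:
  assumes "0 < r" and "(x, y) \<in> E_aff r" and "(x, y) \<notin> pos_quadrant"
  shows "on_unbounded_branch r (x, y)"
proof -
  have swap: "(y, x) \<in> E_aff r" using assms(2) by (rule E_aff_swap)
  have axes: "x = -1 \<Longrightarrow> y = 0" "y = -1 \<Longrightarrow> x = 0"
    using assms(1,2) by (auto simp: mem_E_aff_iff I_numer_def)
  have corner: "on_unbounded_branch r (0, -1)"
    using assms(1) by (intro on_unbounded_branch_middle) (auto simp: mem_E_aff_iff I_numer_def)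
  consider "x < -1" | "x = -1" | "-1 < x" "x \<le> 0" | "y < -1" | "y = -1" | "-1 < y" "y \<le> 0"
    using assms(3) by (fastforce simp: pos_quadrant_def)
  then show ?thesis
  proof cases
    case 1
    with assms(2) show ?thesis by (rule on_unbounded_branch_left)
  next
    case 2
    then show ?thesis using axes(1) corner on_unbounded_branch_swap by simp
  next
    case 3
    then show ?thesis using assms(1,2) by (intro on_unbounded_branch_middle)
  next
    case 4
    then show ?thesis using swap on_unbounded_branch_left on_unbounded_branch_swap by blast
  next
    case 5
    then show ?thesis using axes(2) corner by simp
  next
    case 6
    then show ?thesis
      using swap assms(1) on_unbounded_branch_middle on_unbounded_branch_swap by blast
  qed
qed

lemma on_unbounded_branch_outside_neg_triangle:
  assumes "r < 0" and "(x, y) \<in> E_aff r" and "(x, y) \<notin> neg_triangle"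
  shows "on_unbounded_branch r (x, y)"
proof -
  have swap: "(y, x) \<in> E_aff r" using assms(2) by (rule E_aff_swap)
  have axes: "x = -1 \<Longrightarrow> y = 0" "y = -1 \<Longrightarrow> x = 0"
    using assms(1,2) by (auto simp: mem_E_aff_iff I_numer_def)
  have corner: "on_unbounded_branch r (0, -1)"
    using assms(1) by (intro on_unbounded_branch_right) (auto simp: mem_E_aff_iff I_numer_def)
  consider "x < -1" | "x = -1" | "0 \<le> x" | "y < -1" | "y = -1" | "0 \<le> y"
    | "-1 < x" "x < 0" "-1 < y" "y < 0" "-1 \<le> x + y"
    using assms(3) by (fastforce simp: neg_triangle_def)
  then show ?thesis
  proof cases
    case 1
    with assms(2) show ?thesis by (rule on_unbounded_branch_left)
  next
    case 2
    then show ?thesis using axes(1) corner on_unbounded_branch_swap by simp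
  next
    case 3
    then show ?thesis using assms by (intro on_unbounded_branch_right) auto
  next
    case 4
    then show ?thesis using swap on_unbounded_branch_left on_unbounded_branch_swap by blast
  next
    case 5
    then show ?thesis using axes(2) corner by simp
  next
    case 6
    then show ?thesis
      using swap assms(1) on_unbounded_branch_right on_unbounded_branch_swap by fastforce
  next
    case 7
    then have "0 \<le> I_numer (x, y)" by (simp add: I_numer_def)
    moreover have "r * x * y < 0"
      using 7 assms(1) by (simp add: mult_neg_neg mult_neg_pos mult.assoc)
    ultimately show ?thesis using assms(2) by (simp add: mem_E_aff_iff)
  qed
qed

section \<open>Bounded components\<close>

lemma connected_component_subset_clopen:
  assumes "open U" and "closed K" and "E \<inter> U \<subseteq> K" and "E \<inter> K \<subseteq> U"
    and "p \<in> U" and "p \<in> E"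
  shows "connected_component_set E p \<subseteq> U"
proof -
  let ?C = "connected_component_set E p"
  have "?C \<subseteq> E" by (rule connected_component_subset)
  moreover have "U \<inter> ?C = {} \<or> - K \<inter> ?C = {}"
    using \<open>?C \<subseteq> E\<close> assms(1-4)
    by (intro connectedD[OF connected_connected_component]) (auto simp: open_Compl)
  ultimately show ?thesis using assms by auto
qed

lemma E_aff_pos_quadrant_bound:
  assumes "0 < r" and "(x, y) \<in> E_aff r" and "0 < x" "0 < y"
  shows "1 / r \<le> x"
proof -
  have "1 * 1 < (x + 1) * (x + y + 1)" using assms(3,4) by (intro mult_strict_mono) auto
  then have "(y + 1) * 1 < (y + 1) * ((x + 1) * (x + y + 1))"
    using assms(4) by (intro mult_strict_left_mono) auto
  then have "1 * y < (r * x) * y" using assms(2) by (simp add: mem_E_aff_iff I_numer_def algebra_simps)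
  then have "1 < r * x" using assms(4) by (simp add: mult_less_cancel_right)
  then show ?thesis using assms(1) by (simp add: divide_le_eq mult.commute)
qed

lemma E_aff_neg_triangle_bound:
  assumes "r < 0" and "(x, y) \<in> E_aff r" and "(x, y) \<in> neg_triangle"
  shows "r * x \<le> x + 1"
proof -
  have xy: "-1 < x" "-1 < y" "x + y < -1" using assms(3) by (auto simp: neg_triangle_def)
  define w where "w = - (x + y + 1)"
  have w: "0 < w" "w < - y" "y < 0" using xy by (auto simp: w_def)
  have "(y + 1) * w < 1 * w" using w by (intro mult_strict_right_mono) auto
  then have "(y + 1) * w < - y" using w by linarith
  then have "(x + 1) * ((y + 1) * w) < (x + 1) * (- y)"
    using xy w by (intro mult_strict_left_mono) auto
  moreover have "(x + 1) * ((y + 1) * w) = - (r * x * y)"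
    using assms(2) by (simp add: mem_E_aff_iff I_numer_def w_def algebra_simps)
  ultimately have "(x + 1) * y < (r * x) * y" by (simp add: algebra_simps)
  then show ?thesis using w(3) by (simp add: mult_less_cancel_right)
qed

lemma mem_neg_triangle_of_closed_bounds:
  assumes "r < 0" and "(x, y) \<in> E_aff r"
    and "x \<le> 0" "y \<le> 0" "r * x \<le> x + 1" "r * y \<le> y + 1" "x + y + 1 \<le> 0"
  shows "(x, y) \<in> neg_triangle"
proof -
  have "0 \<le> r * x" "0 \<le> r * y" using assms(1,3,4) by (simp_all add: mult_nonpos_nonpos)
  then have "-1 \<le> x" "-1 \<le> y" using assms(5,6) by linarith+
  moreover have "x \<noteq> -1" "y \<noteq> -1"
    using assms(1,2,5,6) by (auto simp: mem_E_aff_iff I_numer_def)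
  moreover have "x + y + 1 \<noteq> 0"
  proof
    assume "x + y + 1 = 0"
    then have "x = 0 \<or> y = 0" using assms(1,2) by (simp add: mem_E_aff_iff I_numer_def)
    then show False using \<open>x + y + 1 = 0\<close> \<open>x \<noteq> -1\<close> \<open>y \<noteq> -1\<close> by auto
  qed
  ultimately show ?thesis using assms(7) by (auto simp: neg_triangle_def)
qed

lemma bounded_component_subset_pos_quadrant:
  assumes "0 < r" and "p \<in> E_aff r" and "bounded (connected_component_set (E_aff r) p)"
  shows "connected_component_set (E_aff r) p \<subseteq> pos_quadrant"
proof (rule connected_component_subset_clopen)
  let ?K = "{z. 1 / r \<le> fst z \<and> 1 / r \<le> snd z}"
  show "open pos_quadrant" unfolding pos_quadrant_def
    by (intro open_Collect_conj open_Collect_less continuous_intros)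
  show "closed ?K" by (intro closed_Collect_conj closed_Collect_le continuous_intros)
  show "E_aff r \<inter> pos_quadrant \<subseteq> ?K"
    using E_aff_pos_quadrant_bound[OF assms(1)] E_aff_swap by (fastforce simp: pos_quadrant_def)
  show "E_aff r \<inter> ?K \<subseteq> pos_quadrant"
    using assms(1) by (auto simp: pos_quadrant_def intro: less_le_trans[of 0 "1 / r"])
  show "p \<in> pos_quadrant"
  proof (rule ccontr)
    assume "p \<notin> pos_quadrant"
    then have "on_unbounded_branch r p"
      using on_unbounded_branch_outside_pos_quadrant[OF assms(1), of "fst p" "snd p"] assms(2) by simp
    then show False using unbounded_component_if_on_unbounded_branch assms(3) by blast
  qed
qed fact

lemma bounded_component_subset_neg_triangle:
  assumes "r < 0" and "p \<in> E_aff r" and "bounded (connected_component_set (E_aff r) p)"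
  shows "connected_component_set (E_aff r) p \<subseteq> neg_triangle"
proof (rule connected_component_subset_clopen)
  let ?K = "{z. fst z \<le> 0 \<and> snd z \<le> 0 \<and> r * fst z \<le> fst z + 1 \<and> r * snd z \<le> snd z + 1
    \<and> fst z + snd z + 1 \<le> 0}"
  show "open neg_triangle" unfolding neg_triangle_def
    by (intro open_Collect_conj open_Collect_less continuous_intros)
  show "closed ?K" by (intro closed_Collect_conj closed_Collect_le continuous_intros)
  show "E_aff r \<inter> neg_triangle \<subseteq> ?K"
    using E_aff_neg_triangle_bound[OF assms(1)] E_aff_swap
    by (fastforce simp: neg_triangle_def add.commute)
  show "E_aff r \<inter> ?K \<subseteq> neg_triangle"
    using mem_neg_triangle_of_closed_bounds[OF assms(1)] by fastforce
  show "p \<in> neg_triangle"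
  proof (rule ccontr)
    assume "p \<notin> neg_triangle"
    then have "on_unbounded_branch r p"
      using on_unbounded_branch_outside_neg_triangle[OF assms(1), of "fst p" "snd p"] assms(2) by simp
    then show False using unbounded_component_if_on_unbounded_branch assms(3) by blast
  qed
qed fact

theorem mainTheorem4:
  fixes r :: real and p q :: "real \<times> real"
  assumes "r \<in> {r_minus<..<0} \<union> {r_plus<..}"
    and "p \<in> E_aff r"
    and "bounded (connected_component_set (E_aff r) p)"
    and "q \<in> connected_component_set (E_aff r) p"
    and "T2_defined_at q"
  shows "T (T q) \<in> E_aff r - connected_component_set (E_aff r) p"
proof -
  let ?C = "connected_component_set (E_aff r) p"
  have "0 < r_plus" unfolding r_plus_def by (simp add: add_pos_nonneg)
  then have "r \<noteq> 0" using assms(1) by auto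
  obtain U where "?C \<subseteq> U" and avoid: "\<And>z. T_defined_at z \<Longrightarrow> T z \<notin> U"
  proof (cases "0 < r")
    case True
    then show ?thesis
      using that bounded_component_subset_pos_quadrant assms(2,3) T_notin_pos_quadrant by blast
  next
    case False
    with \<open>r \<noteq> 0\<close> have "r < 0" by simp
    then show ?thesis
      using that bounded_component_subset_neg_triangle assms(2,3) T_notin_neg_triangle by blast
  qed
  have "T (T q) \<in> E_aff r"
    using T2_maps_E_aff \<open>r \<noteq> 0\<close> assms(4,5) connected_component_subset by blast
  moreover have "T (T q) \<notin> U" using avoid assms(5) by (simp add: T2_defined_at_def)
  ultimately show ?thesis using \<open>?C \<subseteq> U\<close> by blast
qed

end
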